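(* Let $n\ge 1$, $V=\mathbb F_2^n$, and let $\rho\in\mathrm{Sym}(V)\setminus\mathrm{AGL}(V)$ with $0\rho=0$. Let $\overline\rho\in\mathrm{Sym}(V\times V)$ be the map $(x,y)\overline\rho=(x+y,\ y+(x+y)\rho)$. Let $U\le V\times V$ be a subgroup, and suppose there are subgroups $A,B,C,D\le V$ and a group homomorphism $\varphi:A\to C$ such that $$U=\{(a,\ a\varphi+d)\mid a\in A,\ d\in D\}.$$ Assume that $U$ is a linear block for $\overline\rho$. Then: (1) $D\le A$; (2) $A\varphi\le A$; (3) $D\varphi\le D$.
   Context: Maps act on the right: $x\rho$ denotes the image of $x$ under $\rho$, and $fg$ means first $f$ then $g$. $\mathrm{Sym}(V)$ is the symmetric group on $V$, $\mathrm{AGL}(V)$ the group of affine permutations of $V$. A subgroup $U\le V\times V$ is a linear block for $f\in\mathrm{Sym}(V\times V)$ if for every $(v,w)\in V\times V$ there exists $(v',w')\in V\times V$ with $(U+(v,w))f=U+(v',w')$ (equivalently $(v',w')=(v,w)f$). The map $\overline\rho$ is a bijection with inverse $(x,y)\overline\rho^{-1}=(x+y+x\rho,\ y+x\rho)$. *)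

theory Defs
  imports "HOL-Analysis.Analysis" "HOL-Library.Z2"
begin

text \<open>V = F_2^n is modelled as the type bit ^ 'n, with n = CARD('n) >= 1.\<close>

type_synonym 'n F2vec = "bit ^ 'n"

definition add_subgroup :: "'a::ab_group_add set \<Rightarrow> bool" where
  "add_subgroup S \<longleftrightarrow> 0 \<in> S \<and> (\<forall>x\<in>S. \<forall>y\<in>S. x + y \<in> S) \<and> (\<forall>x\<in>S. - x \<in> S)"

definition f2_linear :: "('n::finite F2vec \<Rightarrow> 'n F2vec) \<Rightarrow> bool" where
  "f2_linear L \<longleftrightarrow> (\<forall>x y. L (x + y) = L x + L y) \<and>
     (\<forall>(c::bit) x. L (\<chi> i. c * x $ i) = (\<chi> i. c * L x $ i))"

definition AGL :: "('n::finite F2vec \<Rightarrow> 'n F2vec) set" where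
  "AGL = {f. bij f \<and> (\<exists>L c. f2_linear L \<and> (\<forall>x. f x = L x + c))}"

definition rho_bar :: "('n::finite F2vec \<Rightarrow> 'n F2vec) \<Rightarrow> 'n F2vec \<times> 'n F2vec \<Rightarrow> 'n F2vec \<times> 'n F2vec" where
  "rho_bar \<rho> = (\<lambda>(x, y). (x + y, y + \<rho> (x + y)))"

definition linear_block :: "'a::ab_group_add set \<Rightarrow> ('a \<Rightarrow> 'a) \<Rightarrow> bool" where
  "linear_block U f \<longleftrightarrow> (\<forall>p. \<exists>q. f ` ((\<lambda>u. u + p) ` U) = (\<lambda>u. u + q) ` U)"

end

theory Submission
  imports Defs
begin

text \<open>Since \<rho> fixes 0, so does \<rho>-bar, and a linear block for it is then mapped into itself.
  Applying \<rho>-bar to (a, a\<phi> + d) \<in> U gives a + a\<phi> + d \<in> A together with a condition in D;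
  the cases a = 0 and d = 0 give D \<le> A and A\<phi> \<le> A. For \<psi> = 1 + \<phi> the choice d = a\<psi> makes the
  first coordinate vanish (characteristic 2) and shows that a\<psi> \<in> D forces a \<in> D; on the finite
  group A this already implies D\<psi> \<le> D, i.e. D\<phi> \<le> D.\<close>

lemma funpow_eventually_periodic:
  fixes f :: "'a::finite \<Rightarrow> 'a"
  obtains p m where "p > 0" "\<And>j q. m \<le> j \<Longrightarrow> f ^^ (j + q * p) = f ^^ j"
proof -
  have "\<not> inj (\<lambda>k::nat. f ^^ k)"
  proof
    assume "inj (\<lambda>k::nat. f ^^ k)"
    then have "infinite (range (\<lambda>k::nat. f ^^ k))"
      using finite_imageD by blast
    then show False by simp
  qed
  then obtain m m' where "m < m'" "f ^^ m' = f ^^ m"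
    unfolding inj_def by (metis linorder_neqE_nat)
  define p where "p = m' - m"
  have period: "f ^^ (m + p) = f ^^ m"
    using \<open>m < m'\<close> \<open>f ^^ m' = f ^^ m\<close> by (simp add: p_def)
  have periodic: "f ^^ (j + q * p) = f ^^ j" if "m \<le> j" for j q
  proof (induction q)
    case (Suc q)
    have "j + Suc q * p = (j - m + q * p) + (m + p)"
      using that by simp
    then have "f ^^ (j + Suc q * p) = f ^^ (j - m + q * p) \<circ> f ^^ (m + p)"
      by (simp only: funpow_add)
    also have "\<dots> = f ^^ (j - m + q * p + m)"
      by (subst period) (simp only: funpow_add)
    also have "j - m + q * p + m = j + q * p"
      using that by simp
    finally show ?case using Suc.IH by simp
  qed simp
  have "p > 0"
    using \<open>m < m'\<close> by (simp add: p_def)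
  then show thesis
    using periodic by (rule that)
qed

lemma funpow_idempotent_power:
  fixes f :: "'a::finite \<Rightarrow> 'a"
  obtains K where "K > 0" "f ^^ K \<circ> f ^^ K = f ^^ K"
proof -
  obtain p m where "p > 0" and periodic: "\<And>j q. m \<le> j \<Longrightarrow> f ^^ (j + q * p) = f ^^ j"
    using funpow_eventually_periodic[of f] by blast
  define K where "K = Suc m * p"
  have "K > 0"
    using \<open>p > 0\<close> by (simp add: K_def)
  have "m \<le> m * p"
    using \<open>p > 0\<close> by simp
  then have "m \<le> K"
    unfolding K_def mult_Suc by (rule trans_le_add2)
  then have "f ^^ (K + K) = f ^^ K"
    using periodic[of K "Suc m"] by (simp add: K_def)
  with \<open>K > 0\<close> show thesis
    by (intro that) (simp_all only: funpow_add)
qed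

lemma add_subgroup_zero: "add_subgroup S \<Longrightarrow> 0 \<in> S"
  unfolding add_subgroup_def by blast

lemma add_subgroup_add: "add_subgroup S \<Longrightarrow> x \<in> S \<Longrightarrow> y \<in> S \<Longrightarrow> x + y \<in> S"
  unfolding add_subgroup_def by blast

lemma add_subgroup_diff: "add_subgroup S \<Longrightarrow> x \<in> S \<Longrightarrow> y \<in> S \<Longrightarrow> x - y \<in> S"
  unfolding add_subgroup_def by (metis diff_conv_add_uminus)

lemma linear_block_image_subset:
  assumes "add_subgroup U" "linear_block U f" "f 0 = 0"
  shows "f ` U \<subseteq> U"
proof -
  obtain q where "f ` ((\<lambda>u. u + 0) ` U) = (\<lambda>u. u + q) ` U"
    using \<open>linear_block U f\<close> unfolding linear_block_def by blast
  then have q: "f ` U = (\<lambda>u. u + q) ` U"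
    by simp
  have "0 \<in> f ` U"
    using \<open>f 0 = 0\<close> add_subgroup_zero[OF \<open>add_subgroup U\<close>] by force
  then obtain u0 where "u0 \<in> U" "u0 + q = 0"
    unfolding q by (metis imageE)
  then have "q \<in> U"
    using \<open>add_subgroup U\<close> unfolding add_subgroup_def by (simp add: add_eq_0_iff)
  then show ?thesis
    unfolding q using add_subgroup_add[OF \<open>add_subgroup U\<close>] by blast
qed

lemma additive_on_diff:
  fixes g :: "'a::ab_group_add \<Rightarrow> 'b::ab_group_add"
  assumes "add_subgroup A" "\<And>x y. x \<in> A \<Longrightarrow> y \<in> A \<Longrightarrow> g (x + y) = g x + g y"
    and "x \<in> A" "y \<in> A"
  shows "g (x - y) = g x - g y"
proof -
  have "g x = g (x - y) + g y"
    using assms(2)[of "x - y" y] add_subgroup_diff[OF assms(1,3,4)] assms(4) by simp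
  then show ?thesis
    by simp
qed

text \<open>An additive self-map of a finite group whose preimage of a subgroup D lies in D also
  maps D into D: some power E of the map is idempotent, so x - E x \<in> ker E \<subseteq> D, which lets
  membership in D be tested after applying E.\<close>

lemma additive_preimage_subset_imp_image_subset:
  fixes \<psi> :: "'a::{finite, ab_group_add} \<Rightarrow> 'a"
  assumes A: "add_subgroup A" and D: "add_subgroup D" and "D \<subseteq> A"
    and maps: "\<psi> ` A \<subseteq> A"
    and additive: "\<And>x y. x \<in> A \<Longrightarrow> y \<in> A \<Longrightarrow> \<psi> (x + y) = \<psi> x + \<psi> y"
    and preimage: "\<And>x. x \<in> A \<Longrightarrow> \<psi> x \<in> D \<Longrightarrow> x \<in> D"
  shows "\<psi> ` D \<subseteq> D"
proof -
  have maps_pow: "(\<psi> ^^ k) x \<in> A" if "x \<in> A" for k x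
    using that maps by (induction k) auto
  have additive_pow: "(\<psi> ^^ k) (x + y) = (\<psi> ^^ k) x + (\<psi> ^^ k) y" if "x \<in> A" "y \<in> A" for k x y
    using that by (induction k) (simp_all add: additive maps_pow)
  have preimage_pow: "x \<in> D" if "x \<in> A" "(\<psi> ^^ k) x \<in> D" for k x
    using that
  proof (induction k arbitrary: x)
    case (Suc k)
    have "\<psi> x \<in> A"
      using Suc.prems(1) maps by blast
    moreover have "(\<psi> ^^ k) (\<psi> x) \<in> D"
      using Suc.prems(2) by (simp add: funpow_Suc_right del: funpow.simps)
    ultimately have "\<psi> x \<in> D"
      by (rule Suc.IH)
    with Suc.prems(1) show ?case
      by (rule preimage)
  qed simp
  obtain K where "K > 0" and idem: "\<psi> ^^ K \<circ> \<psi> ^^ K = \<psi> ^^ K"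
    by (rule funpow_idempotent_power)
  define E where "E = \<psi> ^^ K"
  have E_mem_iff: "E x \<in> D \<longleftrightarrow> x \<in> D" if "x \<in> A" for x
  proof -
    have "E (x - E x) = E x - E (E x)"
      by (rule additive_on_diff[OF A]) (use additive_pow maps_pow that in \<open>simp_all add: E_def\<close>)
    also have "\<dots> = 0"
      using idem by (simp add: E_def fun_eq_iff)
    finally have "E (x - E x) = 0" .
    then have "x - E x \<in> D"
      using preimage_pow[of "x - E x" K] add_subgroup_zero[OF D] add_subgroup_diff[OF A]
        that maps_pow by (simp add: E_def)
    show ?thesis
    proof
      assume "E x \<in> D"
      then have "E x + (x - E x) \<in> D"
        using \<open>x - E x \<in> D\<close> by (rule add_subgroup_add[OF D])
      then show "x \<in> D" by simp
    next
      assume "x \<in> D"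
      then have "x - (x - E x) \<in> D"
        using \<open>x - E x \<in> D\<close> by (rule add_subgroup_diff[OF D])
      then show "E x \<in> D" by simp
    qed
  qed
  obtain k where "K = Suc k"
    using \<open>K > 0\<close> gr0_implies_Suc by blast
  have E_comm: "E \<circ> \<psi> = \<psi> \<circ> E"
    unfolding E_def by (simp only: funpow_Suc_right[symmetric] funpow.simps(2)[symmetric])
  have "\<psi> ^^ k \<circ> E \<circ> \<psi> = (\<psi> ^^ k \<circ> \<psi>) \<circ> E"
    by (simp add: comp_assoc E_comm)
  also have "\<psi> ^^ k \<circ> \<psi> = E"
    unfolding E_def \<open>K = Suc k\<close> by (rule funpow_Suc_right[symmetric])
  finally have shift: "(\<psi> ^^ k) (E (\<psi> d)) = E d" for d
    using idem unfolding E_def by (metis comp_apply)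
  show ?thesis
  proof
    fix y assume "y \<in> \<psi> ` D"
    then obtain d where "d \<in> D" "y = \<psi> d" by blast
    then have "d \<in> A" "\<psi> d \<in> A"
      using \<open>D \<subseteq> A\<close> maps by auto
    have "(\<psi> ^^ k) (E (\<psi> d)) \<in> D"
      using shift E_mem_iff \<open>d \<in> A\<close> \<open>d \<in> D\<close> by simp
    moreover have "E (\<psi> d) \<in> A"
      unfolding E_def using maps_pow \<open>\<psi> d \<in> A\<close> .
    ultimately have "E (\<psi> d) \<in> D"
      using preimage_pow by blast
    then show "y \<in> D"
      using E_mem_iff \<open>\<psi> d \<in> A\<close> \<open>y = \<psi> d\<close> by blast
  qed
qed

instance bit :: finite
  by standard (auto intro: finite_subset[of _ "{0, 1}"])


lemma F2vec_two [simp]: "(2 :: 'n::finite F2vec) = 0"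
  by (simp add: vec_eq_iff)

lemma mem_graph_iff:
  "(x, y) \<in> {(a, \<phi> a + d) | a d. a \<in> A \<and> d \<in> D} \<longleftrightarrow> x \<in> A \<and> y - \<phi> x \<in> (D :: 'a::ab_group_add set)"
  by (auto intro!: exI[of _ "y - \<phi> x"])

lemma rho_bar_graph_image:
  fixes \<rho> \<phi> :: "'n::finite F2vec \<Rightarrow> 'n F2vec"
  assumes "\<rho> 0 = 0" "add_subgroup U" "linear_block U (rho_bar \<rho>)"
    and U_eq: "U = {(a, \<phi> a + d) | a d. a \<in> A \<and> d \<in> D}"
    and "a \<in> A" "d \<in> D"
  shows "a + (\<phi> a + d) \<in> A"
    and "\<phi> a + d + \<rho> (a + (\<phi> a + d)) - \<phi> (a + (\<phi> a + d)) \<in> D"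
proof -
  have "rho_bar \<rho> 0 = 0"
    using \<open>\<rho> 0 = 0\<close> by (simp add: rho_bar_def zero_prod_def)
  then have "rho_bar \<rho> ` U \<subseteq> U"
    using assms(2,3) by (rule linear_block_image_subset[rotated 2])
  moreover have "(a, \<phi> a + d) \<in> U"
    using \<open>a \<in> A\<close> \<open>d \<in> D\<close> unfolding U_eq by blast
  ultimately have "rho_bar \<rho> (a, \<phi> a + d) \<in> U"
    by blast
  then have "(a + (\<phi> a + d), \<phi> a + d + \<rho> (a + (\<phi> a + d))) \<in> U"
    by (simp add: rho_bar_def)
  then show "a + (\<phi> a + d) \<in> A" "\<phi> a + d + \<rho> (a + (\<phi> a + d)) - \<phi> (a + (\<phi> a + d)) \<in> D"
    by (simp_all only: U_eq mem_graph_iff)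
qed

theorem mainTheorem1:
  fixes \<rho> :: "'n::finite F2vec \<Rightarrow> 'n F2vec"
    and U :: "('n F2vec \<times> 'n F2vec) set"
    and A B C D :: "'n F2vec set"
    and \<phi> :: "'n F2vec \<Rightarrow> 'n F2vec"
  assumes rho_sym: "bij \<rho>"
    and rho_not_affine: "\<rho> \<notin> AGL"
    and rho_zero: "\<rho> 0 = 0"
    and U_sub: "add_subgroup U"
    and A_sub: "add_subgroup A" and B_sub: "add_subgroup B"
    and C_sub: "add_subgroup C" and D_sub: "add_subgroup D"
    and phi_maps: "\<forall>a\<in>A. \<phi> a \<in> C"
    and phi_hom: "\<forall>a\<in>A. \<forall>b\<in>A. \<phi> (a + b) = \<phi> a + \<phi> b"
    and U_eq: "U = {(a, \<phi> a + d) | a d. a \<in> A \<and> d \<in> D}"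
    and block: "linear_block U (rho_bar \<rho>)"
  shows "D \<subseteq> A \<and> \<phi> ` A \<subseteq> A \<and> \<phi> ` D \<subseteq> D"
proof -
  note image = rho_bar_graph_image[OF rho_zero U_sub block U_eq]
  have phi_zero: "\<phi> 0 = 0"
    using phi_hom add_subgroup_zero[OF A_sub] by (metis add_cancel_right_right add_0)
  have D_sub_A: "D \<subseteq> A"
    using image(1)[OF add_subgroup_zero[OF A_sub]] by (auto simp: phi_zero)
  have phi_A: "\<phi> a \<in> A" if "a \<in> A" for a
    using add_subgroup_diff[OF A_sub image(1)[OF that add_subgroup_zero[OF D_sub]] that] by simp
  have preimage: "x \<in> D" if "x \<in> A" "x + \<phi> x \<in> D" for x
  proof -
    have "x + (\<phi> x + (x + \<phi> x)) = 0" "\<phi> x + (x + \<phi> x) = x"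
      by (simp_all add: add_ac)
    then show ?thesis
      using image(2)[OF that] by (simp add: rho_zero phi_zero)
  qed
  have "(\<lambda>x. x + \<phi> x) ` D \<subseteq> D"
    by (rule additive_preimage_subset_imp_image_subset[OF A_sub D_sub D_sub_A])
      (use phi_A phi_hom preimage add_subgroup_add[OF A_sub] in \<open>auto simp: add_ac\<close>)
  then have "\<phi> d \<in> D" if "d \<in> D" for d
    using add_subgroup_diff[OF D_sub _ that, of "d + \<phi> d"] that by auto
  then show ?thesis
    using D_sub_A phi_A by blast
qed

end
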